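(* Let $n\geq 2$ and $q=2^m\geq 4$. Let $B_n\in\mathrm{GL}_{n+1}(\mathbb{F}_q)$ be the matrix $E_{1,2}+E_{2,3}+\cdots+E_{n,n+1}+E_{n+1,1}$, where $E_{i,j}$ is the $(n+1)\times(n+1)$ matrix with $1$ in entry $(i,j)$ and $0$ elsewhere. Then the permutation of $\mathbb{P}^n(\mathbb{F}_q)$ induced by $B_n$ (acting on column vectors of homogeneous coordinates) is even. *)

theory Defs
  imports "HOL-Combinatorics.Permutations"
begin

text \<open>Vectors in F^(n+1) are functions nat => F supported on {0..n}
 (coordinate i here corresponds to coordinate i+1 in the paper).\<close>
definition vecs :: "nat \<Rightarrow> (nat \<Rightarrow> 'a::field) set" where
  "vecs n = {v. \<forall>i>n. v i = 0}"

definition proj_pt :: "(nat \<Rightarrow> 'a::field) \<Rightarrow> (nat \<Rightarrow> 'a) set" where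
  "proj_pt v = {(\<lambda>i. c * v i) | c. c \<noteq> 0}"

definition proj_space :: "nat \<Rightarrow> ((nat \<Rightarrow> 'a::field) set) set" where
  "proj_space n = proj_pt ` (vecs n - {(\<lambda>_. 0)})"

text \<open>The matrix B_n = E_{1,2}+...+E_{n,n+1}+E_{n+1,1}, 0-indexed: entry (i,j) is 1 iff j = i+1 mod (n+1).\<close>
definition Bmat :: "nat \<Rightarrow> nat \<Rightarrow> nat \<Rightarrow> 'a::field" where
  "Bmat n i j = (if i \<le> n \<and> j \<le> n \<and> j = Suc i mod Suc n then 1 else 0)"

definition mat_vec :: "nat \<Rightarrow> (nat \<Rightarrow> nat \<Rightarrow> 'a::field) \<Rightarrow> (nat \<Rightarrow> 'a) \<Rightarrow> (nat \<Rightarrow> 'a)" where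
  "mat_vec n A v = (\<lambda>i. if i \<le> n then (\<Sum>j\<le>n. A i j * v j) else 0)"

text \<open>Map on P^n induced by a matrix (identity outside P^n, so it is a permutation of the type).\<close>
definition induced_perm :: "nat \<Rightarrow> (nat \<Rightarrow> nat \<Rightarrow> 'a::field)
     \<Rightarrow> (nat \<Rightarrow> 'a) set \<Rightarrow> (nat \<Rightarrow> 'a) set" where
  "induced_perm n A S = (if S \<in> proj_space n then mat_vec n A ` S else S)"

end

theory Submission
  imports Defs "HOL-Number_Theory.Residues"
begin

(* B_n permutes the homogeneous coordinates cyclically, so it is a product of n coordinate
   transpositions, and it suffices that each coordinate transposition (a b) induces an even
   permutation tau of P^n.  tau is an involution moving exactly the points [v] with v_a and v_b
   distinct.  For a third coordinate k (here n >= 2 is used) the transvection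
   v |-> v + (v_a + v_b) e_k induces, in characteristic 2, an involution iota commuting with tau,
   and the group generated by tau and iota acts freely on the points moved by tau.  These points
   thus split into orbits {x, tau x, iota x, tau iota x}, on each of which tau is a product of two
   transpositions. *)

lemma two_eq_zero_if_card_power_of_two:
  assumes "card (UNIV :: 'a::{field,finite} set) = 2 ^ m" "m > 0"
  shows "(2::'a) = 0"
proof -
  have prime: "prime CHAR('a)"
    by (simp add: finite_imp_CHAR_pos prime_CHAR_semidom)
  have "CHAR('a) dvd 2 ^ m"
    using CHAR_dvd_CARD[where 'a='a] assms(1) by simp
  then have "CHAR('a) dvd 2"
    by (rule prime_dvd_power[OF prime])
  then have "CHAR('a) = 2"
    by (rule primes_dvd_imp_eq[OF prime two_is_prime_nat])
  then show ?thesis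
    using of_nat_CHAR[where 'a='a] by simp
qed

lemma char_two_add_eq_zero_iff:
  fixes x y :: "'a::field"
  assumes "(2::'a) = 0"
  shows "x + y = 0 \<longleftrightarrow> x = y"
proof -
  have "y + y = 0"
    using assms by (simp flip: mult_2)
  then show ?thesis
    by (metis add_right_cancel)
qed

lemma char_two_square_eq_one:
  fixes c :: "'a::field"
  assumes "(2::'a) = 0" "c * c = 1"
  shows "c = 1"
proof -
  have "(c - 1) * (c - 1) = c * c - 2 * c + 1"
    by (simp add: algebra_simps)
  also have "\<dots> = 0"
    using assms by simp
  finally show ?thesis
    by simp
qed

lemma char_two_swap_scalar_eq:
  fixes c x y :: "'a::field"
  assumes "(2::'a) = 0" "x = c * y" "y = c * x"
  shows "x = y"
proof (cases "x = 0 \<and> y = 0")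
  case False
  have "(c * c) * x = x" "(c * c) * y = y"
    by (simp_all only: mult.assoc flip: assms(2,3))
  with False have "c * c = 1"
    by (metis mult_cancel_right1)
  then have "c = 1"
    by (rule char_two_square_eq_one[OF assms(1)])
  with assms(2) show ?thesis
    by simp
qed simp

text \<open>Each orbit \<open>{a, \<tau> a, \<iota> a, \<tau> (\<iota> a)}\<close> of the group generated by \<open>\<tau>\<close> and \<open>\<iota>\<close>
  has four elements and contributes two transpositions to \<open>\<tau>\<close>; removing one orbit is the
  induction step.\<close>

lemma evenperm_involution_with_free_commuting_involution:
  fixes \<tau> \<iota> :: "'a \<Rightarrow> 'a"
  assumes "finite {x. \<tau> x \<noteq> x}"
    and "\<And>x. \<tau> (\<tau> x) = x" "\<And>x. \<iota> (\<iota> x) = x" "\<And>x. \<iota> (\<tau> x) = \<tau> (\<iota> x)"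
    and "\<And>x. \<tau> x \<noteq> x \<Longrightarrow> \<iota> x \<noteq> x \<and> \<iota> x \<noteq> \<tau> x"
  shows "evenperm \<tau>"
  using assms
proof (induction "card {x. \<tau> x \<noteq> x}" arbitrary: \<tau> rule: less_induct)
  case less
  show ?case
  proof (cases "\<tau> = id")
    case False
    then obtain a where a: "\<tau> a \<noteq> a" by (auto simp: fun_eq_iff)
    define b c d where "b = \<tau> a" and "c = \<iota> a" and "d = \<iota> b"
    have \<tau>Q: "\<tau> b = a" "\<tau> a = b" "\<tau> c = d" "\<tau> d = c" and \<iota>Q: "\<iota> a = c" "\<iota> c = a" "\<iota> b = d" "\<iota> d = b"
      using less.prems(2-4) by (auto simp: b_def c_def d_def)
    have "\<iota> a \<noteq> a" "\<iota> a \<noteq> b" "\<iota> b \<noteq> b"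
      using less.prems(5)[OF a] less.prems(5)[of b] \<tau>Q(1) a by (auto simp: b_def)
    then have distinct: "distinct [a, b, c, d]"
      using a \<tau>Q \<iota>Q unfolding b_def c_def d_def by auto
    define Q where "Q = {a, b, c, d}"
    have \<tau>_in_Q: "\<tau> x \<in> Q \<longleftrightarrow> x \<in> Q" for x
      using \<tau>Q less.prems(2) unfolding Q_def by (metis insert_iff singletonD)
    have \<iota>_in_Q: "\<iota> x \<in> Q \<longleftrightarrow> x \<in> Q" for x
      using \<iota>Q less.prems(3) unfolding Q_def by (metis insert_iff singletonD)
    define \<tau>' where "\<tau>' x = (if x \<in> Q then x else \<tau> x)" for x
    have decomp: "\<tau> = transpose a b \<circ> transpose c d \<circ> \<tau>'"
    proof
      fix x
      show "\<tau> x = (transpose a b \<circ> transpose c d \<circ> \<tau>') x"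
      proof (cases "x \<in> Q")
        case True
        then show ?thesis
          using distinct \<tau>Q by (auto simp: Q_def \<tau>'_def transpose_def)
      next
        case False
        then have "\<tau> x \<notin> Q"
          using \<tau>_in_Q by blast
        with False show ?thesis
          by (simp add: Q_def \<tau>'_def transpose_def)
      qed
    qed
    have supp: "{x. \<tau>' x \<noteq> x} = {x. \<tau> x \<noteq> x} - Q"
      by (auto simp: \<tau>'_def)
    have "evenperm \<tau>'"
    proof (rule less.hyps)
      show "card {x. \<tau>' x \<noteq> x} < card {x. \<tau> x \<noteq> x}"
        unfolding supp using less.prems(1) a by (intro psubset_card_mono) (auto simp: Q_def)
      show "finite {x. \<tau>' x \<noteq> x}"
        using less.prems(1) supp by simp
      show "\<tau>' (\<tau>' x) = x" for x
        using less.prems(2) \<tau>_in_Q by (simp add: \<tau>'_def)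
      show "\<iota> (\<tau>' x) = \<tau>' (\<iota> x)" for x
        using less.prems(4) \<iota>_in_Q by (simp add: \<tau>'_def)
      show "\<iota> x \<noteq> x \<and> \<iota> x \<noteq> \<tau>' x" if "\<tau>' x \<noteq> x" for x
        using less.prems(5) \<iota>_in_Q that by (auto simp: \<tau>'_def split: if_splits)
    qed (use less.prems(3) in simp)
    moreover have "permutation \<tau>'"
    proof -
      have "\<tau>' \<circ> \<tau>' = id"
        using less.prems(2) \<tau>_in_Q by (auto simp: fun_eq_iff \<tau>'_def)
      then show ?thesis
        using less.prems(1) supp by (auto simp: permutation o_bij)
    qed
    ultimately show ?thesis
      using distinct
      by (simp add: decomp evenperm_comp permutation_compose permutation_swap_id evenperm_swap)
  qed simp
qed

definition proj_compatible :: "nat \<Rightarrow> ((nat \<Rightarrow> 'a::field) \<Rightarrow> (nat \<Rightarrow> 'a)) \<Rightarrow> bool" where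
  "proj_compatible n L \<longleftrightarrow>
     (\<forall>c v. L (\<lambda>i. c * v i) = (\<lambda>i. c * L v i)) \<and> L ` (vecs n - {\<lambda>_. 0}) \<subseteq> vecs n - {\<lambda>_. 0}"

definition proj_induced ::
    "nat \<Rightarrow> ((nat \<Rightarrow> 'a::field) \<Rightarrow> (nat \<Rightarrow> 'a)) \<Rightarrow> (nat \<Rightarrow> 'a) set \<Rightarrow> (nat \<Rightarrow> 'a) set" where
  "proj_induced n L P = (if P \<in> proj_space n then L ` P else P)"

lemma induced_perm_eq_proj_induced: "induced_perm n A = proj_induced n (mat_vec n A)"
  by (simp add: fun_eq_iff induced_perm_def proj_induced_def)

lemma proj_pt_eqD:
  assumes "proj_pt v = proj_pt w"
  shows "\<exists>c. w = (\<lambda>i. c * v i)"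
proof -
  have "w \<in> proj_pt w"
    unfolding proj_pt_def by (rule CollectI, rule exI[of _ 1]) simp
  then show ?thesis
    using assms unfolding proj_pt_def by auto
qed

lemma image_proj_pt:
  assumes "\<And>c v. L (\<lambda>i. c * v i) = (\<lambda>i. c * L v i)"
  shows "L ` proj_pt v = proj_pt (L v)"
proof -
  have "L ` proj_pt v = {L (\<lambda>i. c * v i) | c. c \<noteq> 0}"
    unfolding proj_pt_def by blast
  then show ?thesis
    unfolding proj_pt_def by (simp add: assms)
qed

lemma proj_spaceE:
  assumes "P \<in> proj_space n"
  obtains v where "v \<in> vecs n" "v \<noteq> (\<lambda>_. 0)" "P = proj_pt v"
  using assms unfolding proj_space_def by auto

lemma proj_space_subset_vecs: "P \<in> proj_space n \<Longrightarrow> P \<subseteq> vecs n"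
  unfolding proj_space_def proj_pt_def vecs_def by auto

lemma finite_proj_space: "finite (proj_space n :: (nat \<Rightarrow> 'a::{field,finite}) set set)"
proof -
  have "vecs n = {v :: nat \<Rightarrow> 'a. \<forall>i. (i \<in> {..n} \<longrightarrow> v i \<in> UNIV) \<and> (i \<notin> {..n} \<longrightarrow> v i = 0)}"
    unfolding vecs_def by auto
  also have "finite \<dots>"
    by (rule finite_set_of_finite_funs) simp_all
  finally show ?thesis
    unfolding proj_space_def by simp
qed

lemma proj_induced_proj_pt:
  assumes "proj_compatible n L" "v \<in> vecs n" "v \<noteq> (\<lambda>_. 0)"
  shows "proj_induced n L (proj_pt v) = proj_pt (L v)"
  using assms image_proj_pt[of L v]
  unfolding proj_induced_def proj_compatible_def proj_space_def by auto

lemma proj_induced_in_proj_space: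
  assumes "proj_compatible n L" "P \<in> proj_space n"
  shows "proj_induced n L P \<in> proj_space n"
proof -
  obtain v where "v \<in> vecs n" "v \<noteq> (\<lambda>_. 0)" "P = proj_pt v"
    using assms(2) by (rule proj_spaceE)
  with assms(1) show ?thesis
    unfolding proj_compatible_def by (auto simp: proj_induced_proj_pt[OF assms(1)] proj_space_def)
qed

lemma proj_induced_id: "proj_induced n id = id"
  by (simp add: fun_eq_iff proj_induced_def)

lemma proj_induced_comp:
  assumes "proj_compatible n L"
  shows "proj_induced n (M \<circ> L) = proj_induced n M \<circ> proj_induced n L"
proof
  fix P
  show "proj_induced n (M \<circ> L) P = (proj_induced n M \<circ> proj_induced n L) P"
  proof (cases "P \<in> proj_space n")
    case True
    then have "L ` P \<in> proj_space n"
      using proj_induced_in_proj_space[OF assms] by (simp add: proj_induced_def)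
    with True show ?thesis
      by (simp add: proj_induced_def image_comp)
  qed (simp add: proj_induced_def)
qed

lemma proj_induced_cong:
  assumes "\<And>v. v \<in> vecs n \<Longrightarrow> L v = M v"
  shows "proj_induced n L = proj_induced n M"
proof
  fix P
  show "proj_induced n L P = proj_induced n M P"
  proof (cases "P \<in> proj_space n")
    case True
    then have "L ` P = M ` P"
      using assms proj_space_subset_vecs by (intro image_cong) auto
    with True show ?thesis
      by (simp add: proj_induced_def)
  qed (simp add: proj_induced_def)
qed

lemma proj_induced_involution:
  assumes "proj_compatible n L" "\<And>v. L (L v) = v"
  shows "proj_induced n L (proj_induced n L P) = P"
proof -
  have "L \<circ> L = id"
    using assms(2) by (simp add: fun_eq_iff)
  then have "proj_induced n L \<circ> proj_induced n L = id"
    by (simp flip: proj_induced_comp[OF assms(1)] add: proj_induced_id)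
  then show ?thesis
    by (simp add: fun_eq_iff)
qed

lemma proj_induced_permutes_if_involution:
  assumes "proj_compatible n L" "\<And>v. L (L v) = v"
  shows "proj_induced n L permutes proj_space n"
proof (rule bij_imp_permutes)
  show "bij_betw (proj_induced n L) (proj_space n) (proj_space n)"
    by (rule bij_betwI[where g = "proj_induced n L"])
       (use proj_induced_in_proj_space[OF assms(1)] proj_induced_involution[OF assms] in auto)
qed (simp add: proj_induced_def)

lemma proj_compatible_coord_perm:
  assumes "\<sigma> permutes {..n}"
  shows "proj_compatible n (\<lambda>v. v \<circ> \<sigma>)"
proof -
  have "v \<circ> \<sigma> \<in> vecs n" if "v \<in> vecs n" for v :: "nat \<Rightarrow> 'a"
    using that permutes_not_in[OF assms] by (simp add: vecs_def)
  moreover have "v \<circ> \<sigma> \<noteq> (\<lambda>_. 0)" if "v \<noteq> (\<lambda>_. 0)" for v :: "nat \<Rightarrow> 'a"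
    using that permutes_surj[OF assms] by (metis comp_apply surj_def)
  ultimately show ?thesis
    unfolding proj_compatible_def by (auto simp: comp_def)
qed

lemma proj_induced_transpose_movedE:
  assumes "proj_induced n (\<lambda>v. v \<circ> transpose a b) P \<noteq> P" "a \<le> n" "b \<le> n"
  obtains v where "v \<in> vecs n" "v \<noteq> (\<lambda>_. 0)" "P = proj_pt v" "v a \<noteq> v b"
proof -
  have "P \<in> proj_space n"
    using assms(1) by (auto simp: proj_induced_def)
  then obtain v where v: "v \<in> vecs n" "v \<noteq> (\<lambda>_. 0)" "P = proj_pt v"
    by (rule proj_spaceE)
  moreover have "v a \<noteq> v b"
  proof
    assume "v a = v b"
    then have "v \<circ> transpose a b = v"
      by (auto simp: fun_eq_iff transpose_def)
    with assms v show False
      by (simp add: proj_induced_proj_pt proj_compatible_coord_perm permutes_swap_id)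
  qed
  ultimately show thesis
    by (rule that)
qed

definition transvection :: "nat \<Rightarrow> nat \<Rightarrow> nat \<Rightarrow> (nat \<Rightarrow> 'a::field) \<Rightarrow> (nat \<Rightarrow> 'a)" where
  "transvection k a b v = v(k := v k + v a + v b)"

lemma proj_compatible_transvection:
  assumes "k \<le> n" "k \<noteq> a" "k \<noteq> b"
  shows "proj_compatible n (transvection k a b)"
  unfolding proj_compatible_def
proof (intro conjI allI image_subsetI)
  show "transvection k a b (\<lambda>i. c * v i) = (\<lambda>i. c * transvection k a b v i)" for c and v :: "nat \<Rightarrow> 'a"
    by (simp add: transvection_def fun_eq_iff algebra_simps)
  fix v :: "nat \<Rightarrow> 'a"
  assume v: "v \<in> vecs n - {\<lambda>_. 0}"
  have "transvection k a b v \<in> vecs n"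
    using v assms(1) by (simp add: vecs_def transvection_def)
  moreover have "transvection k a b v \<noteq> (\<lambda>_. 0)"
  proof
    assume zero: "transvection k a b v = (\<lambda>_. 0)"
    then have "v a = 0" "v b = 0"
      using assms(2,3) by (metis fun_upd_other transvection_def)+
    with zero have "v = (\<lambda>_. 0)"
      by (simp add: transvection_def fun_eq_iff split: if_splits)
    with v show False
      by simp
  qed
  ultimately show "transvection k a b v \<in> vecs n - {\<lambda>_. 0}"
    by simp
qed

lemma transvection_involutive:
  assumes "(2::'a::field) = 0" "k \<noteq> a" "k \<noteq> b"
  shows "transvection k a b (transvection k a b v) = (v :: nat \<Rightarrow> 'a)"
  using assms by (simp add: transvection_def fun_eq_iff add.assoc char_two_add_eq_zero_iff)

lemma transvection_comp_transpose:
  assumes "k \<noteq> a" "k \<noteq> b"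
  shows "transvection k a b (v \<circ> transpose a b) = transvection k a b v \<circ> transpose a b"
  using assms by (auto simp: transvection_def fun_eq_iff transpose_def)

lemma proj_pt_transvection_neq:
  fixes v :: "nat \<Rightarrow> 'a::field"
  assumes char2: "(2::'a) = 0" and "k \<noteq> a" "k \<noteq> b" and ab: "v a \<noteq> v b"
  shows "proj_pt (transvection k a b v) \<noteq> proj_pt v"
    and "proj_pt (transvection k a b v) \<noteq> proj_pt (v \<circ> transpose a b)"
proof -
  have Ja: "transvection k a b v a = v a" and Jb: "transvection k a b v b = v b"
    using assms by (simp_all add: transvection_def)
  show "proj_pt (transvection k a b v) \<noteq> proj_pt v"
  proof
    assume "proj_pt (transvection k a b v) = proj_pt v"
    then obtain c where c: "v = (\<lambda>i. c * transvection k a b v i)"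
      by (auto dest: proj_pt_eqD)
    have "v a = c * v a" "v b = c * v b"
      by (metis c Ja, metis c Jb)
    with ab have "c = 1"
      by (metis mult_cancel_right1)
    with c have "transvection k a b v k = v k"
      by (metis mult_1)
    then have "v a + v b = 0"
      by (simp add: transvection_def add.assoc)
    with ab show False
      by (simp add: char_two_add_eq_zero_iff[OF char2])
  qed
  show "proj_pt (transvection k a b v) \<noteq> proj_pt (v \<circ> transpose a b)"
  proof
    assume "proj_pt (transvection k a b v) = proj_pt (v \<circ> transpose a b)"
    then obtain c where c: "v \<circ> transpose a b = (\<lambda>i. c * transvection k a b v i)"
      by (auto dest: proj_pt_eqD)
    have "v b = c * v a" "v a = c * v b"
      by (metis c Ja comp_apply transpose_apply_first, metis c Jb comp_apply transpose_apply_second)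
    with ab show False
      using char_two_swap_scalar_eq[OF char2] by metis
  qed
qed

lemma evenperm_proj_induced_transpose:
  fixes a b n :: nat
  assumes char2: "(2::'a::{field,finite}) = 0" and "a \<le> n" "b \<le> n" "a \<noteq> b" "2 \<le> n"
  shows "evenperm (proj_induced n (\<lambda>v :: nat \<Rightarrow> 'a. v \<circ> transpose a b))"
proof -
  have "\<exists>k \<le> 2. k \<noteq> a \<and> k \<noteq> b"
    by presburger
  then obtain k where k: "k \<le> n" "k \<noteq> a" "k \<noteq> b"
    using assms(5) by (meson order_trans)
  define T :: "(nat \<Rightarrow> 'a) \<Rightarrow> (nat \<Rightarrow> 'a)" where "T v = v \<circ> transpose a b" for v
  define J :: "(nat \<Rightarrow> 'a) \<Rightarrow> (nat \<Rightarrow> 'a)" where "J = transvection k a b"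
  have T_compat: "proj_compatible n T"
    unfolding T_def using assms(2,3) by (intro proj_compatible_coord_perm permutes_swap_id) auto
  have J_compat: "proj_compatible n J"
    unfolding J_def using k by (rule proj_compatible_transvection)
  define \<tau> \<iota> where "\<tau> = proj_induced n T" and "\<iota> = proj_induced n J"
  have "\<iota> \<circ> \<tau> = \<tau> \<circ> \<iota>"
  proof -
    have "J \<circ> T = T \<circ> J"
      using k(2,3) by (simp add: fun_eq_iff J_def T_def transvection_comp_transpose)
    then show ?thesis
      unfolding \<tau>_def \<iota>_def by (metis T_compat J_compat proj_induced_comp)
  qed
  show ?thesis
    unfolding T_def[symmetric] \<tau>_def[symmetric]
  proof (rule evenperm_involution_with_free_commuting_involution[where \<iota> = \<iota>])
    show "finite {P. \<tau> P \<noteq> P}"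
      by (rule finite_subset[OF _ finite_proj_space[of n]]) (auto simp: \<tau>_def proj_induced_def)
    show "\<tau> (\<tau> P) = P" for P
      unfolding \<tau>_def using T_compat by (rule proj_induced_involution) (simp add: T_def comp_assoc)
    show "\<iota> (\<iota> P) = P" for P
      unfolding \<iota>_def using J_compat by (rule proj_induced_involution) (simp add: J_def transvection_involutive char2 k)
    show "\<iota> (\<tau> P) = \<tau> (\<iota> P)" for P
      using \<open>\<iota> \<circ> \<tau> = \<tau> \<circ> \<iota>\<close> by (metis comp_apply)
    fix P
    assume "\<tau> P \<noteq> P"
    then obtain v where "v \<in> vecs n" "v \<noteq> (\<lambda>_. 0)" "P = proj_pt v" "v a \<noteq> v b"
      unfolding \<tau>_def T_def using assms(2,3) by (rule proj_induced_transpose_movedE)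
    then show "\<iota> P \<noteq> P \<and> \<iota> P \<noteq> \<tau> P"
      using proj_pt_transvection_neq[OF char2 k(2,3)] T_compat J_compat
      by (simp add: \<tau>_def \<iota>_def proj_induced_proj_pt J_def T_def)
  qed
qed

lemma permutes_evenperm_proj_induced_coord_perm:
  assumes char2: "(2::'a::{field,finite}) = 0" and "2 \<le> n" and \<sigma>: "\<sigma> permutes {..n}"
  shows "proj_induced n (\<lambda>v :: nat \<Rightarrow> 'a. v \<circ> \<sigma>) permutes proj_space n
    \<and> evenperm (proj_induced n (\<lambda>v :: nat \<Rightarrow> 'a. v \<circ> \<sigma>))"
  using \<sigma> finite_atMost[of n]
proof (induction rule: permutes_induct)
  case id
  have "(\<lambda>v :: nat \<Rightarrow> 'a. v \<circ> id) = id"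
    by (simp add: fun_eq_iff)
  then show ?case
    by (simp only: proj_induced_id permutes_id evenperm_id)
next
  case (swap a b p)
  let ?T = "\<lambda>v :: nat \<Rightarrow> 'a. v \<circ> transpose a b" and ?P = "\<lambda>v :: nat \<Rightarrow> 'a. v \<circ> p"
  have "(\<lambda>v :: nat \<Rightarrow> 'a. v \<circ> (transpose a b \<circ> p)) = ?P \<circ> ?T"
    by (simp add: fun_eq_iff)
  then have decomp: "proj_induced n (\<lambda>v. v \<circ> (transpose a b \<circ> p)) = proj_induced n ?P \<circ> proj_induced n ?T"
    using swap.hyps by (simp add: proj_induced_comp proj_compatible_coord_perm permutes_swap_id)
  have T_perm: "proj_induced n ?T permutes proj_space n"
    using swap.hyps by (intro proj_induced_permutes_if_involution proj_compatible_coord_perm permutes_swap_id)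
      (auto simp: comp_assoc)
  have T_even: "evenperm (proj_induced n ?T)"
    using swap.hyps assms(1,2) by (intro evenperm_proj_induced_transpose) auto
  have "permutation (proj_induced n ?P)" "permutation (proj_induced n ?T)"
    using swap.IH T_perm finite_proj_space permutation_permutes by blast+
  then show ?case
    unfolding decomp using swap.IH T_perm T_even evenperm_comp permutes_compose by blast
qed

definition cyclic_shift :: "nat \<Rightarrow> nat \<Rightarrow> nat" where
  "cyclic_shift n i = (if i \<le> n then Suc i mod Suc n else i)"

lemma cyclic_shift_permutes: "cyclic_shift n permutes {..n}"
proof (rule inj_imp_permutes)
  show "inj_on (cyclic_shift n) {..n}"
    by (rule inj_onI) (auto simp: cyclic_shift_def mod_Suc split: if_splits)
qed (auto simp: cyclic_shift_def)

lemma mat_vec_Bmat: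
  assumes "v \<in> vecs n"
  shows "mat_vec n (Bmat n) v = v \<circ> cyclic_shift n"
proof
  fix i
  show "mat_vec n (Bmat n) v i = (v \<circ> cyclic_shift n) i"
  proof (cases "i \<le> n")
    case True
    have "(\<Sum>j\<le>n. Bmat n i j * v j) = (\<Sum>j\<le>n. if j = Suc i mod Suc n then v j else 0)"
      using True by (intro sum.cong) (auto simp: Bmat_def)
    also have "\<dots> = v (Suc i mod Suc n)"
      by (simp add: sum.delta' less_Suc_eq_le[symmetric])
    finally show ?thesis
      using True by (simp add: mat_vec_def cyclic_shift_def)
  next
    case False
    then show ?thesis
      using assms by (simp add: mat_vec_def cyclic_shift_def vecs_def)
  qed
qed

theorem lemma3p3:
  fixes n m :: nat
  assumes "n \<ge> 2"
    and "card (UNIV :: 'a::{field,finite} set) = 2 ^ m"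
    and "(2::nat) ^ m \<ge> 4"
  shows "induced_perm n (Bmat n :: nat \<Rightarrow> nat \<Rightarrow> 'a) permutes proj_space n
         \<and> evenperm (induced_perm n (Bmat n :: nat \<Rightarrow> nat \<Rightarrow> 'a))"
proof -
  have "m > 0"
    using assms(3) by (cases m) auto
  with assms(2) have char2: "(2::'a) = 0"
    by (rule two_eq_zero_if_card_power_of_two)
  have "induced_perm n (Bmat n :: nat \<Rightarrow> nat \<Rightarrow> 'a) = proj_induced n (\<lambda>v. v \<circ> cyclic_shift n)"
    unfolding induced_perm_eq_proj_induced by (rule proj_induced_cong) (rule mat_vec_Bmat)
  then show ?thesis
    using permutes_evenperm_proj_induced_coord_perm[OF char2 assms(1) cyclic_shift_permutes] by simp
qed

end
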